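(* Let $\Omega\subset\mathbb R^n$ be a bounded domain, $1\le m\le n$, $T>0$, $Q_T=\Omega\times(0,T)$, $\partial'Q_T=(\Omega\times\{0\})\cup(\partial\Omega\times[0,T])$, $f$ a function on $\bar Q_T$ and $\varphi$ a function on $\partial'Q_T$ with $\varphi(\cdot,0)\in C^2(\Omega)$. Assume that $f\ge\nu_m>0$ on $\bar Q_T$, that there is a point $x_0\in\Omega$ such that $\varphi_{xx}(x_0,0)$ is $(m-1)$-positive, and that there is a point $x_1\in\Omega$ such that $\varphi_{xx}(x_1,0)$ is not $(m-1)$-positive. Then there is no $u\in C^{2,1}(\bar Q_T)$ with $E_m[u]=f$ in $\bar Q_T$ and $u=\varphi$ on $\partial'Q_T$, no matter how small $T>0$ is.
   Context: For $S\in\mathrm{Sym}(n)$ and $0\le p\le n$, $T_p(S)$ is the sum of all principal $p\times p$ minors of $S$, with $T_0(S)=1$. For $1\le k\le n$, $K_k=\{S\in\mathrm{Sym}(n):T_p(S)>0,\ p=1,\dots,k\}$; $S$ is $k$-positive if $S\in K_k$; by convention every matrix is $0$-positive. For $u(x,t)$, $u_{xx}$ is its Hessian in $x$ and $E_m[u]=-u_t\,T_{m-1}(u_{xx})+T_m(u_{xx})$. *)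

theory Defs
  imports "HOL-Analysis.Analysis"
begin

definition Tsum :: "nat \<Rightarrow> real^'n^'n \<Rightarrow> real" where
  "Tsum p S = (\<Sum>I \<in> {I. card I = p}.
      \<Sum>\<sigma> \<in> {\<sigma>. \<sigma> permutes I}. of_int (sign \<sigma>) * (\<Prod>i\<in>I. S $ i $ \<sigma> i))"

definition symmetric_mat :: "real^'n^'n \<Rightarrow> bool" where
  "symmetric_mat S \<longleftrightarrow> transpose S = S"

definition kpositive :: "nat \<Rightarrow> real^'n^'n \<Rightarrow> bool" where
  "kpositive k S \<longleftrightarrow> k = 0 \<or> (symmetric_mat S \<and> (\<forall>p\<in>{1..k}. Tsum p S > 0))"

text \<open>E_m[u] at a point, in terms of u_t and the spatial Hessian u_xx.\<close>
definition Em :: "nat \<Rightarrow> real \<Rightarrow> real^'n^'n \<Rightarrow> real" where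
  "Em m ut H = - ut * Tsum (m - 1) H + Tsum m H"

text \<open>u in C^{2,1}(closure Q_T), Q_T = \<Omega> x (0,T), with spatial gradient Du,
  spatial Hessian H and time derivative ut: these derivatives exist in Q_T and
  u, Du, H, ut are continuous on the closure (continuous extensions).\<close>
definition C21_closure ::
  "('n::finite) itself \<Rightarrow> (real^'n) set \<Rightarrow> real \<Rightarrow> (real^'n \<Rightarrow> real \<Rightarrow> real) \<Rightarrow>
   (real^'n \<Rightarrow> real \<Rightarrow> real^'n) \<Rightarrow> (real^'n \<Rightarrow> real \<Rightarrow> real^'n^'n) \<Rightarrow>
   (real^'n \<Rightarrow> real \<Rightarrow> real) \<Rightarrow> bool" where
  "C21_closure _ \<Omega> T u Du H ut \<longleftrightarrow>
     (\<forall>x\<in>\<Omega>. \<forall>t\<in>{0<..<T}.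
        ((\<lambda>y. u y t) has_derivative (\<lambda>h. Du x t \<bullet> h)) (at x) \<and>
        ((\<lambda>y. Du y t) has_derivative (\<lambda>h. H x t *v h)) (at x) \<and>
        ((\<lambda>s. u x s) has_real_derivative ut x t) (at t)) \<and>
     continuous_on (closure \<Omega> \<times> {0..T}) (\<lambda>(x,t). u x t) \<and>
     continuous_on (closure \<Omega> \<times> {0..T}) (\<lambda>(x,t). Du x t) \<and>
     continuous_on (closure \<Omega> \<times> {0..T}) (\<lambda>(x,t). H x t) \<and>
     continuous_on (closure \<Omega> \<times> {0..T}) (\<lambda>(x,t). ut x t)"

end

theory Submission
  imports Defs "HOL-Computational_Algebra.Fundamental_Theorem_Algebra"
begin

(*
  At time 0 the spatial Hessian of a solution u is that of the initial datum, so the equation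
  E_m[u] = f >= nu > 0 gives  - u_t T_{m-1}(S) + T_m(S) > 0  for S = phi_xx(x,0) at every x in Omega.
  For a symmetric S the polynomial det(cI + S) and all its derivatives in c are real-rooted; the
  (n-j)-th derivative has the coefficients T_j(S), ..., T_0(S) up to positive factors, and a
  real-rooted polynomial with nonnegative coefficients and positive constant term has only
  positive coefficients.  Hence T_1(S), ..., T_{m-1}(S) >= 0 together with the inequality above
  forces T_1(S), ..., T_{m-1}(S) > 0.  So the set of points where phi_xx(x,0) is (m-1)-positive
  is relatively open and closed in the connected domain; it contains x0, hence also x1.
*)

section \<open>Principal minor sums and \<open>det (c I + A)\<close>\<close>

definition principal_minor :: "'n set \<Rightarrow> 'a::comm_ring_1^'n^'n \<Rightarrow> 'a" where
  "principal_minor J A = (\<Sum>\<sigma> \<in> {\<sigma>. \<sigma> permutes J}. of_int (sign \<sigma>) * (\<Prod>i\<in>J. A $ i $ \<sigma> i))"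

definition principal_minor_sum :: "nat \<Rightarrow> 'a::comm_ring_1^'n^'n \<Rightarrow> 'a" where
  "principal_minor_sum p A = (\<Sum>J \<in> {J. card J = p}. principal_minor J A)"

lemma principal_minor_sum_0 [simp]: "principal_minor_sum 0 (A::'a::comm_ring_1^'n^'n) = 1"
proof -
  have "{J::'n set. card J = 0} = {{}}" by auto
  moreover have "{\<sigma>. \<sigma> permutes ({}::'n set)} = {id}" by auto
  ultimately show ?thesis by (simp add: principal_minor_sum_def principal_minor_def)
qed

lemma principal_minor_sum_of_real:
  fixes S :: "real^'n^'n"
  shows "principal_minor_sum p (\<chi> i j. (of_real (S$i$j) :: 'a::{real_algebra_1,comm_ring_1})) =
         of_real (principal_minor_sum p S)"
  by (simp add: principal_minor_sum_def principal_minor_def)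

lemma sum_permutes_diagonal_outside:
  fixes A :: "'a::comm_ring_1^'n^'n"
  shows "(\<Sum>\<sigma> \<in> {\<sigma>. \<sigma> permutes UNIV}. of_int (sign \<sigma>) *
            ((\<Prod>i\<in>J. A$i$\<sigma> i) * (\<Prod>i\<in>-J. if i = \<sigma> i then c else 0)))
         = c ^ (CARD('n) - card J) * principal_minor J A"
proof -
  have diag: "(\<Prod>i\<in>-J. if i = \<sigma> i then c else 0) =
      (if \<forall>i\<in>-J. \<sigma> i = i then c ^ (CARD('n) - card J) else 0)" for \<sigma> :: "'n \<Rightarrow> 'n"
  proof (cases "\<forall>i\<in>-J. \<sigma> i = i")
    case True
    then have "(\<Prod>i\<in>-J. if i = \<sigma> i then c else 0) = (\<Prod>i\<in>-J. c)"
      by (intro prod.cong) auto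
    then show ?thesis using True by (simp add: Compl_eq_Diff_UNIV card_Diff_subset)
  next
    case False
    then obtain i where "i \<in> -J" "\<sigma> i \<noteq> i" by auto
    then show ?thesis using False by (auto intro!: prod_zero bexI[of _ i])
  qed
  have fix_outside: "{\<sigma>. \<sigma> permutes UNIV \<and> (\<forall>i\<in>-J. \<sigma> i = i)} = {\<sigma>. \<sigma> permutes J}"
    unfolding permutes_def by auto
  have "(\<Sum>\<sigma> \<in> {\<sigma>. \<sigma> permutes UNIV}. of_int (sign \<sigma>) *
            ((\<Prod>i\<in>J. A$i$\<sigma> i) * (\<Prod>i\<in>-J. if i = \<sigma> i then c else 0)))
      = (\<Sum>\<sigma> \<in> {\<sigma>. \<sigma> permutes UNIV}. if \<forall>i\<in>-J. \<sigma> i = i then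
           c ^ (CARD('n) - card J) * (of_int (sign \<sigma>) * (\<Prod>i\<in>J. A$i$\<sigma> i)) else 0)"
    by (intro sum.cong refl) (simp add: diag)
  also have "\<dots> = (\<Sum>\<sigma> \<in> {\<sigma>. \<sigma> permutes UNIV \<and> (\<forall>i\<in>-J. \<sigma> i = i)}.
           c ^ (CARD('n) - card J) * (of_int (sign \<sigma>) * (\<Prod>i\<in>J. A$i$\<sigma> i)))"
    by (subst sum.inter_filter[symmetric]) (auto intro!: finite_permutations)
  also have "\<dots> = c ^ (CARD('n) - card J) * principal_minor J A"
    unfolding fix_outside principal_minor_def by (simp add: sum_distrib_left)
  finally show ?thesis .
qed

lemma det_mat_add:
  fixes A :: "'a::comm_ring_1^'n^'n"
  shows "det (mat c + A) = (\<Sum>J\<in>Pow UNIV. c ^ (CARD('n) - card J) * principal_minor J A)"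
proof -
  have "det (mat c + A) = (\<Sum>\<sigma> \<in> {\<sigma>. \<sigma> permutes UNIV}. of_int (sign \<sigma>) *
        (\<Sum>J\<in>Pow UNIV. (\<Prod>i\<in>J. A$i$\<sigma> i) * (\<Prod>i\<in>-J. if i = \<sigma> i then c else 0)))"
    unfolding det_def
    by (intro sum.cong refl arg_cong2[where f="(*)"])
      (simp add: mat_def add.commute prod_add Compl_eq_Diff_UNIV)
  also have "\<dots> = (\<Sum>J\<in>Pow UNIV. \<Sum>\<sigma> \<in> {\<sigma>. \<sigma> permutes UNIV}. of_int (sign \<sigma>) *
        ((\<Prod>i\<in>J. A$i$\<sigma> i) * (\<Prod>i\<in>-J. if i = \<sigma> i then c else 0)))"
    by (simp add: sum_distrib_left sum.swap[of _ "{\<sigma>. \<sigma> permutes UNIV}"])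
  also have "\<dots> = (\<Sum>J\<in>Pow UNIV. c ^ (CARD('n) - card J) * principal_minor J A)"
    by (simp add: sum_permutes_diagonal_outside)
  finally show ?thesis .
qed

definition det_shift_poly :: "'a::comm_ring_1^'n^'n \<Rightarrow> 'a poly" where
  "det_shift_poly A = (\<Sum>p\<le>CARD('n). monom (principal_minor_sum p A) (CARD('n) - p))"

lemma poly_det_shift_poly: "poly (det_shift_poly A) c = det (mat c + (A::'a::comm_ring_1^'n^'n))"
proof -
  have "det (mat c + A) =
      (\<Sum>p\<le>CARD('n). \<Sum>J\<in>{J\<in>Pow UNIV. card J = p}. c ^ (CARD('n) - card J) * principal_minor J A)"
    unfolding det_mat_add by (rule sum.group[symmetric]) (auto simp: card_mono)
  also have "\<dots> = (\<Sum>p\<le>CARD('n). c ^ (CARD('n) - p) * principal_minor_sum p A)"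
    by (intro sum.cong refl) (simp add: principal_minor_sum_def sum_distrib_left)
  finally show ?thesis
    by (simp add: det_shift_poly_def poly_sum poly_monom mult.commute)
qed

lemma coeff_det_shift_poly:
  fixes A :: "'a::comm_ring_1^'n^'n"
  shows "coeff (det_shift_poly A) i =
           (if i \<le> CARD('n) then principal_minor_sum (CARD('n) - i) A else 0)"
proof -
  have "coeff (det_shift_poly A) i =
        (\<Sum>p\<in>{p. p \<le> CARD('n) \<and> CARD('n) - p = i}. principal_minor_sum p A)"
    by (simp add: det_shift_poly_def coeff_sum sum.inter_filter[symmetric] if_distrib
        cong: if_cong)
  also have "{p. p \<le> CARD('n) \<and> CARD('n) - p = i} = (if i \<le> CARD('n) then {CARD('n) - i} else {})"
    by auto
  finally show ?thesis by simp
qed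

lemma degree_det_shift_poly: "degree (det_shift_poly (A::'a::comm_ring_1^'n^'n)) = CARD('n)"
  by (intro antisym degree_le le_degree) (simp_all add: coeff_det_shift_poly)

lemma det_shift_poly_of_real:
  fixes S :: "real^'n^'n"
  shows "det_shift_poly (\<chi> i j. (of_real (S$i$j) :: 'a::{real_algebra_1,comm_ring_1})) =
         map_poly of_real (det_shift_poly S)"
  by (rule poly_eqI) (simp add: coeff_det_shift_poly coeff_map_poly principal_minor_sum_of_real)

lemma coeff_higher_pderiv_det_shift_poly:
  fixes A :: "'a::idom^'n^'n"
  assumes "j \<le> CARD('n)"
  shows "coeff ((pderiv ^^ (CARD('n) - j)) (det_shift_poly A)) i =
           pochhammer (of_nat (Suc i)) (CARD('n) - j) * (if i \<le> j then principal_minor_sum (j - i) A else 0)"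
proof -
  have "i + (CARD('n) - j) \<le> CARD('n) \<longleftrightarrow> i \<le> j"
    and "i \<le> j \<Longrightarrow> CARD('n) - (i + (CARD('n) - j)) = j - i"
    using assms by arith+
  then show ?thesis by (simp add: coeff_higher_pderiv coeff_det_shift_poly)
qed

section \<open>Real-rooted polynomials\<close>

definition real_rooted :: "complex poly \<Rightarrow> bool" where
  "real_rooted q \<longleftrightarrow> (\<forall>z. poly q z = 0 \<longrightarrow> Im z = 0)"

lemma real_rooted_pderiv:
  assumes deg: "degree q \<ge> 1" and rr: "real_rooted q"
  shows "real_rooted (pderiv q)"
  unfolding real_rooted_def
proof (intro allI impI, rule ccontr)
  fix z assume pz: "poly (pderiv q) z = 0" and Iz: "Im z \<noteq> 0"
  obtain r where qr: "smult (lead_coeff q) (\<Prod>i<degree q. [:-r i, 1:]) = q"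
    using complex_poly_decompose' by blast
  define d where "d = degree q"
  have lc: "lead_coeff q \<noteq> 0" using deg by auto
  have Ir: "Im (r i) = 0" if "i < d" for i
  proof -
    have "poly q (r i) = 0"
      by (subst qr[symmetric]) (use that in \<open>auto simp: d_def poly_prod intro!: prod_zero\<close>)
    then show ?thesis using rr by (simp add: real_rooted_def)
  qed
  define w where "w i = z - r i" for i
  have wnz: "w i \<noteq> 0" if "i < d" for i
    using Ir[OF that] Iz by (auto simp: w_def)
  \<comment> \<open>\<open>q'/q = \<Sum> 1/(z - r\<^sub>i)\<close>, whose imaginary part has the sign of \<open>- Im z\<close>\<close>
  have "poly (pderiv q) z = lead_coeff q * (\<Sum>a<d. \<Prod>i\<in>{..<d} - {a}. w i)"
    by (subst qr[symmetric]) (simp add: d_def pderiv_smult pderiv_prod pderiv_pCons poly_sum poly_prod w_def)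
  also have "(\<Sum>a<d. \<Prod>i\<in>{..<d} - {a}. w i) = (\<Prod>i<d. w i) * (\<Sum>a<d. 1 / w a)"
    by (simp add: sum_distrib_left prod_diff1 wnz)
  finally have "(\<Sum>a<d. 1 / w a) = 0" using pz lc wnz by simp
  moreover have "Im (\<Sum>a<d. 1 / w a) = - Im z * (\<Sum>a<d. 1 / (cmod (w a))\<^sup>2)"
    by (auto simp: Im_sum Im_divide w_def Ir sum_distrib_left cmod_power2 intro!: sum.cong)
  moreover have "(\<Sum>a<d. 1 / (cmod (w a))\<^sup>2) > 0"
    using deg wnz by (intro sum_pos) (auto simp: d_def lessThan_empty_iff)
  ultimately show False using Iz by simp
qed

lemma real_rooted_higher_pderiv:
  assumes "real_rooted q" "k \<le> degree q"
  shows "real_rooted ((pderiv ^^ k) q)"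
  using assms(2)
proof (induction k)
  case 0 then show ?case using assms(1) by simp
next
  case (Suc k)
  have "degree ((pderiv ^^ k) q) \<ge> 1" using Suc.prems by (simp add: degree_higher_pderiv)
  then show ?case using real_rooted_pderiv Suc by simp
qed

lemma coeff_mult_linear:
  fixes p :: "'a::comm_ring_1 poly"
  shows "coeff (p * [:a, 1:]) j = a * coeff p j + (if j = 0 then 0 else coeff p (j - 1))"
  by (cases j) (simp_all add: mult_pCons_right mult.commute)

lemma coeff_prod_linear_pos:
  fixes c :: "nat \<Rightarrow> real"
  assumes "\<And>i. i < d \<Longrightarrow> c i > 0" and "j \<le> d"
  shows "coeff (\<Prod>i<d. [:c i, 1:]) j > 0"
  using assms
proof (induction d arbitrary: j)
  case 0 then show ?case by simp
next
  case (Suc d)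
  let ?P = "\<Prod>i<d. [:c i, 1:]"
  have cd: "c d > 0" using Suc.prems by auto
  have nonneg: "coeff ?P i \<ge> 0" for i
    using Suc.IH Suc.prems(1) by (cases "i \<le> d") (auto simp: coeff_eq_0 degree_prod_eq_sum_degree less_imp_le)
  have "coeff (\<Prod>i<Suc d. [:c i, 1:]) j = c d * coeff ?P j + (if j = 0 then 0 else coeff ?P (j - 1))"
    by (simp only: prod.lessThan_Suc coeff_mult_linear)
  moreover have "c d * coeff ?P j \<ge> 0" using cd nonneg by simp
  moreover have "j = 0 \<Longrightarrow> c d * coeff ?P j > 0" "j \<noteq> 0 \<Longrightarrow> coeff ?P (j - 1) > 0"
    using Suc cd by auto
  ultimately show ?case by (cases "j = 0") auto
qed

lemma map_poly_of_real_mult: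
  "map_poly (of_real :: real \<Rightarrow> 'a::{real_algebra_1,comm_ring_1}) (p * q) =
     map_poly of_real p * map_poly of_real q"
  by (rule poly_eqI) (simp add: coeff_map_poly coeff_mult)

lemma map_poly_of_real_prod:
  "map_poly (of_real :: real \<Rightarrow> 'a::{real_algebra_1,comm_ring_1}) (\<Prod>i\<in>I. p i) =
     (\<Prod>i\<in>I. map_poly of_real (p i))"
  by (induction I rule: infinite_finite_induct) (simp_all add: map_poly_of_real_mult)

lemma poly_map_poly_of_real:
  "poly (map_poly of_real p) (of_real x :: 'a::{real_algebra_1,comm_ring_1}) = of_real (poly p x)"
  by (induction p) (auto simp: map_poly_pCons)

text \<open>A real polynomial positive on \<open>[0, \<infinity>)\<close> with only real roots has only negative roots,
  so it is a positive multiple of a product of factors \<open>X + c\<^sub>i\<close> with \<open>c\<^sub>i > 0\<close>.\<close>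
lemma coeff_pos_if_real_rooted_pos:
  fixes Q :: "real poly"
  assumes rr: "real_rooted (map_poly of_real Q)"
    and pos: "\<And>t. t \<ge> 0 \<Longrightarrow> poly Q t > 0" and i: "i \<le> degree Q"
  shows "coeff Q i > 0"
proof -
  define Qc where "Qc = map_poly complex_of_real Q"
  define d where "d = degree Q"
  have dQ: "degree Qc = d" by (simp add: Qc_def d_def degree_map_poly)
  obtain r where qr: "smult (lead_coeff Qc) (\<Prod>i<d. [:-r i, 1:]) = Qc"
    using complex_poly_decompose'[of Qc] dQ by metis
  define c where "c i = - Re (r i)" for i
  have root: "poly Qc (r i) = 0" if "i < d" for i
    by (subst qr[symmetric]) (use that in \<open>auto simp: poly_prod intro!: prod_zero\<close>)
  have rc: "r i = - of_real (c i)" if "i < d" for i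
    using rr root[OF that] by (simp add: real_rooted_def Qc_def c_def complex_eq_iff)
  have cpos: "c i > 0" if "i < d" for i
  proof (rule ccontr)
    assume "\<not> c i > 0"
    then have "poly Q (- c i) > 0" using pos by simp
    moreover have "complex_of_real (poly Q (- c i)) = 0"
      using root[OF that] rc[OF that] by (simp add: Qc_def poly_map_poly_of_real[symmetric])
    ultimately show False by simp
  qed
  have "lead_coeff Qc = of_real (lead_coeff Q)"
    by (simp add: Qc_def degree_map_poly coeff_map_poly)
  moreover have "(\<Prod>i<d. [:-r i, 1:]) = (\<Prod>i<d. map_poly of_real [:c i, 1:])"
    by (intro prod.cong refl) (simp add: rc map_poly_pCons)
  ultimately have eq: "map_poly of_real (smult (lead_coeff Q) (\<Prod>i<d. [:c i, 1:])) =
      (map_poly of_real Q :: complex poly)"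
    unfolding Qc_def[symmetric] by (subst qr[symmetric]) (simp add: map_poly_smult map_poly_of_real_prod)
  have factor: "Q = smult (lead_coeff Q) (\<Prod>i<d. [:c i, 1:])"
  proof (rule poly_eqI)
    fix n
    have "complex_of_real (coeff (smult (lead_coeff Q) (\<Prod>i<d. [:c i, 1:])) n) = of_real (coeff Q n)"
      using arg_cong[where f="\<lambda>p. coeff p n", OF eq] by (simp only: coeff_map_poly of_real_0)
    then show "coeff Q n = coeff (smult (lead_coeff Q) (\<Prod>i<d. [:c i, 1:])) n"
      by (simp only: of_real_eq_iff)
  qed
  have "coeff Q 0 > 0" using pos[of 0] by (simp add: poly_0_coeff_0)
  then have "lead_coeff Q > 0"
    using coeff_prod_linear_pos[of d c 0] cpos by (subst (asm) factor) (simp add: zero_less_mult_iff)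
  then show ?thesis
    using coeff_prod_linear_pos[of d c i] cpos i by (subst factor) (simp add: d_def)
qed

section \<open>Minor sums of symmetric matrices\<close>

lemma symmetric_mat_iff: "symmetric_mat S \<longleftrightarrow> (\<forall>i j. S $ i $ j = S $ j $ i)"
  by (auto simp: symmetric_mat_def transpose_def vec_eq_iff)

lemma mat_mult_vector: "mat c *v v = c *s v"
  by (auto simp: vec_eq_iff matrix_vector_mult_def mat_def if_distrib[of "\<lambda>x. x * _"] sum.delta
      cong: if_cong)

lemma kernel_if_det_eq_0:
  fixes M :: "'a::field^'n^'n"
  assumes "det M = 0"
  obtains v where "v \<noteq> 0" "M *v v = 0"
proof -
  have "inj ((*v) M) \<longleftrightarrow> det M \<noteq> 0"
    using det_nz_iff_inj_gen[OF matrix_vector_mul_linear_gen, of M]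
    by (simp add: matrix_of_matrix_vector_mul)
  then have "\<not> inj ((*v) M)" using assms by simp
  then obtain x y where "x \<noteq> y" "M *v x = M *v y" unfolding inj_def by auto
  then show ?thesis
    using that[of "x - y"] by (simp add: matrix_vector_mult_diff_distrib)
qed

lemma eigenvalue_real_if_symmetric:
  fixes S :: "real^'n^'n" and v :: "complex^'n"
  assumes sym: "symmetric_mat S" and v: "v \<noteq> 0"
    and eig: "(\<chi> i j. complex_of_real (S$i$j)) *v v = w *s v"
  shows "Im w = 0"
proof -
  \<comment> \<open>the Hermitian form \<open>v\<^sup>* S v = w |v|\<^sup>2\<close> is real\<close>
  define q where "q = (\<Sum>i\<in>UNIV. \<Sum>j\<in>UNIV. cnj (v$i) * complex_of_real (S$i$j) * v$j)"
  define N where "N = (\<Sum>i\<in>UNIV. (cmod (v$i))\<^sup>2)"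
  have row: "(\<Sum>j\<in>UNIV. complex_of_real (S$i$j) * v$j) = w * v$i" for i
    using arg_cong[where f="\<lambda>x. x $ i", OF eig] by (simp add: matrix_vector_mult_def)
  have "q = (\<Sum>i\<in>UNIV. cnj (v$i) * (w * v$i))"
    unfolding q_def row[symmetric] by (simp add: sum_distrib_left mult.assoc)
  also have "\<dots> = w * of_real N"
    by (simp add: N_def sum_distrib_left complex_norm_square[simplified] mult_ac)
  finally have qN: "q = w * of_real N" .
  have "cnj q = (\<Sum>i\<in>UNIV. \<Sum>j\<in>UNIV. v$i * complex_of_real (S$i$j) * cnj (v$j))"
    by (simp add: q_def)
  also have "\<dots> = (\<Sum>j\<in>UNIV. \<Sum>i\<in>UNIV. v$i * complex_of_real (S$i$j) * cnj (v$j))"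
    by (rule sum.swap)
  also have "\<dots> = q"
    unfolding q_def using sym by (intro sum.cong refl) (simp add: symmetric_mat_iff mult_ac)
  finally have "Im q = 0" by (metis cnj.sel(2) equal_neg_zero)
  moreover have "N > 0"
  proof -
    obtain i where "v$i \<noteq> 0" using v by (metis vec_eq_iff zero_index)
    then show ?thesis unfolding N_def by (intro sum_pos2[where i=i]) auto
  qed
  ultimately show ?thesis using qN by simp
qed

lemma real_rooted_det_shift_poly:
  fixes S :: "real^'n^'n"
  assumes "symmetric_mat S"
  shows "real_rooted (map_poly of_real (det_shift_poly S))"
  unfolding real_rooted_def det_shift_poly_of_real[symmetric] poly_det_shift_poly
proof (intro allI impI)
  fix z assume "det (mat z + (\<chi> i j. complex_of_real (S$i$j))) = 0"
  then obtain v where "v \<noteq> 0" "(mat z + (\<chi> i j. complex_of_real (S$i$j))) *v v = 0"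
    by (rule kernel_if_det_eq_0)
  then have "Im (- z) = 0"
    by (intro eigenvalue_real_if_symmetric[OF assms])
      (auto simp: matrix_vector_mult_add_rdistrib mat_mult_vector eq_neg_iff_add_eq_0 add.commute)
  then show "Im z = 0" by simp
qed

lemma Tsum_eq_principal_minor_sum: "Tsum p S = principal_minor_sum p S"
  by (simp add: Tsum_def principal_minor_sum_def principal_minor_def)

lemma Tsum_0 [simp]: "Tsum 0 S = 1"
  by (simp add: Tsum_eq_principal_minor_sum)

lemma continuous_on_Tsum: "continuous_on UNIV (Tsum p :: real^'n^'n \<Rightarrow> real)"
  unfolding Tsum_def by (intro continuous_intros)

text \<open>The polynomial \<open>d\<^sup>n\<^sup>-\<^sup>j/dc\<^sup>n\<^sup>-\<^sup>j det (c I + S)\<close> is real-rooted and has the coefficients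
  \<open>T\<^sub>j, \<dots>, T\<^sub>0\<close> up to positive factors; under the hypotheses they are nonnegative and
  \<open>T\<^sub>j > 0\<close>, so it is positive on \<open>[0, \<infinity>)\<close> and all its coefficients are positive.\<close>
lemma Tsum_pos_below:
  fixes S :: "real^'n^'n"
  assumes sym: "symmetric_mat S" and j: "j \<le> CARD('n)"
    and nonneg: "\<And>p. 0 < p \<Longrightarrow> p < j \<Longrightarrow> Tsum p S \<ge> 0" and pos: "Tsum j S > 0"
    and "q \<le> j"
  shows "Tsum q S > 0"
proof -
  define Q where "Q = (pderiv ^^ (CARD('n) - j)) (det_shift_poly S)"
  have pochhammer_pos: "pochhammer (of_nat (Suc i) :: real) m > 0" for i m
    by (rule pochhammer_pos) simp
  have coeff_Q: "coeff Q i = pochhammer (of_nat (Suc i)) (CARD('n) - j) *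
      (if i \<le> j then Tsum (j - i) S else 0)" for i
    unfolding Q_def Tsum_eq_principal_minor_sum by (rule coeff_higher_pderiv_det_shift_poly[OF j])
  have degree_Q: "degree Q = j"
    using j by (simp add: Q_def degree_higher_pderiv degree_det_shift_poly)
  have map_Q: "map_poly of_real Q = (pderiv ^^ (CARD('n) - j)) (map_poly of_real (det_shift_poly S))"
    by (rule poly_eqI) (simp add: Q_def coeff_map_poly coeff_higher_pderiv pochhammer_of_real[symmetric])
  have real_rooted_Q: "real_rooted (map_poly of_real Q)"
    unfolding map_Q using sym
    by (intro real_rooted_higher_pderiv real_rooted_det_shift_poly) (simp_all add: degree_map_poly degree_det_shift_poly)
  have "coeff Q i \<ge> 0" for i
  proof -
    have "i \<le> j \<Longrightarrow> Tsum (j - i) S \<ge> 0"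
      using nonneg pos by (cases "i = 0"; cases "i = j") auto
    then show ?thesis unfolding coeff_Q using pochhammer_pos[of i] by (simp add: less_imp_le)
  qed
  moreover have "coeff Q 0 > 0" unfolding coeff_Q using pochhammer_pos[of 0] pos by simp
  ultimately have "poly Q t > 0" if "t \<ge> 0" for t
  proof -
    have "poly Q t = coeff Q 0 + (\<Sum>i\<in>{1..degree Q}. coeff Q i * t ^ i)"
      by (simp add: poly_altdef atMost_atLeast0 sum.atLeast_Suc_atMost)
    also have "\<dots> \<ge> coeff Q 0" using \<open>\<And>i. coeff Q i \<ge> 0\<close> that by (simp add: sum_nonneg)
    finally show ?thesis using \<open>coeff Q 0 > 0\<close> by simp
  qed
  then have "coeff Q (j - q) > 0"
    using real_rooted_Q degree_Q by (intro coeff_pos_if_real_rooted_pos) auto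
  then show ?thesis unfolding coeff_Q using \<open>q \<le> j\<close> pochhammer_pos[of "j - q"]
    by (simp add: zero_less_mult_iff) (metis less_asym)
qed

lemma Tsum_pos_if_nonneg:
  fixes S :: "real^'n^'n"
  assumes sym: "symmetric_mat S" and k: "k < CARD('n)"
    and nonneg: "\<forall>p\<in>{1..k}. Tsum p S \<ge> 0" and eq: "- a * Tsum k S + Tsum (Suc k) S > 0"
  shows "\<forall>p\<in>{1..k}. Tsum p S > 0"
proof -
  have "Tsum k S > 0"
  proof (rule ccontr)
    assume not_pos: "\<not> Tsum k S > 0"
    then have "k \<noteq> 0" by (metis Tsum_0 zero_less_one)
    then have "k \<in> {1..k}" by simp
    then have "Tsum k S \<ge> 0" using nonneg by blast
    then have "Tsum k S = 0" using not_pos by simp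
    then have "Tsum (Suc k) S > 0" using eq by simp
    then have "Tsum k S > 0"
      using nonneg k by (intro Tsum_pos_below[OF sym _ _ \<open>Tsum (Suc k) S > 0\<close>]) auto
    with \<open>Tsum k S = 0\<close> show False by simp
  qed
  then show ?thesis
    using nonneg k by (auto intro!: Tsum_pos_below[OF sym, of k])
qed

text \<open>Under the gap hypothesis \<open>k\<close>-positivity is both an open and a closed condition.\<close>
lemma kpositive_connected:
  fixes S :: "'a::topological_space \<Rightarrow> real^'n^'n"
  assumes "connected \<Omega>" and cont: "continuous_on \<Omega> S"
    and gap: "\<And>x. x \<in> \<Omega> \<Longrightarrow> \<forall>p\<in>{1..k}. Tsum p (S x) \<ge> 0 \<Longrightarrow> \<forall>p\<in>{1..k}. Tsum p (S x) > 0"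
    and "x0 \<in> \<Omega>" "kpositive k (S x0)" and "x1 \<in> \<Omega>" "symmetric_mat (S x1)"
  shows "kpositive k (S x1)"
proof (cases "k = 0")
  case False
  have cont_Tsum: "continuous_on \<Omega> (\<lambda>x. Tsum p (S x))" for p
    by (rule continuous_on_compose2[OF continuous_on_Tsum cont]) auto
  define A where "A = (\<Inter>p\<in>{1..k}. \<Omega> \<inter> (\<lambda>x. Tsum p (S x)) -` {0<..})"
  have "A = (\<Inter>p\<in>{1..k}. \<Omega> \<inter> (\<lambda>x. Tsum p (S x)) -` {0..})"
  proof
    show "(\<Inter>p\<in>{1..k}. \<Omega> \<inter> (\<lambda>x. Tsum p (S x)) -` {0..}) \<subseteq> A"
      using False gap by (force simp: A_def)
  qed (auto simp: A_def)
  moreover have "closedin (top_of_set \<Omega>) (\<Inter>p\<in>{1..k}. \<Omega> \<inter> (\<lambda>x. Tsum p (S x)) -` {0..})"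
    using False by (intro closedin_INT continuous_closedin_preimage cont_Tsum) auto
  ultimately have "closedin (top_of_set \<Omega>) A" by simp
  moreover have "openin (top_of_set \<Omega>) A"
    unfolding A_def using False
    by (intro openin_INT2 continuous_openin_preimage_gen cont_Tsum) auto
  moreover have "x0 \<in> A"
    using \<open>x0 \<in> \<Omega>\<close> \<open>kpositive k (S x0)\<close> False by (auto simp: A_def kpositive_def)
  ultimately have "A = \<Omega>"
    using \<open>connected \<Omega>\<close> unfolding connected_clopen by blast
  then have "x1 \<in> A" using \<open>x1 \<in> \<Omega>\<close> by simp
  then show ?thesis
    using \<open>symmetric_mat (S x1)\<close> by (auto simp: A_def kpositive_def)
qed (simp add: kpositive_def)

section \<open>Second derivatives and the initial time\<close>

lemma has_real_derivative_along_line: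
  fixes F :: "'a::real_normed_vector \<Rightarrow> real"
  assumes "(F has_derivative L) (at (p + s *\<^sub>R v))"
  shows "((\<lambda>s. F (p + s *\<^sub>R v)) has_real_derivative L v) (at s)"
proof -
  have "((\<lambda>s. p + s *\<^sub>R v) has_derivative (\<lambda>t. t *\<^sub>R v)) (at s)"
    by (intro derivative_eq_intros) auto
  from has_derivative_compose[OF this assms]
  have "((\<lambda>s. F (p + s *\<^sub>R v)) has_derivative (\<lambda>t. L (t *\<^sub>R v))) (at s)" .
  moreover have "(\<lambda>t. L (t *\<^sub>R v)) = (*) (L v)"
    using linear_cmul[OF has_derivative_linear[OF assms]] by (auto simp: mult.commute)
  ultimately show ?thesis by (simp add: has_field_derivative_def)
qed

lemma mixed_difference_eq_hessian_entry:
  fixes f :: "real^'n \<Rightarrow> real" and Df :: "real^'n \<Rightarrow> real^'n" and H :: "real^'n \<Rightarrow> real^'n^'n"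
  assumes der: "\<And>y. y \<in> \<Omega> \<Longrightarrow>
      (f has_derivative (\<lambda>v. Df y \<bullet> v)) (at y) \<and> (Df has_derivative (\<lambda>v. H y *v v)) (at y)"
    and h: "h > 0"
    and square: "\<And>s t. 0 \<le> s \<Longrightarrow> s \<le> h \<Longrightarrow> 0 \<le> t \<Longrightarrow> t \<le> h \<Longrightarrow>
      x + s *\<^sub>R axis i 1 + t *\<^sub>R axis j 1 \<in> \<Omega>"
  obtains s t where "0 \<le> s" "s \<le> h" "0 \<le> t" "t \<le> h"
    "f (x + h *\<^sub>R axis i 1 + h *\<^sub>R axis j 1) - f (x + h *\<^sub>R axis i 1) - f (x + h *\<^sub>R axis j 1) + f x
       = h\<^sup>2 * H (x + s *\<^sub>R axis i 1 + t *\<^sub>R axis j 1) $ i $ j"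
proof -
  define ei where "ei = (axis i 1 :: real^'n)"
  define ej where "ej = (axis j 1 :: real^'n)"
  define g where "g s = f (x + h *\<^sub>R ej + s *\<^sub>R ei) - f (x + s *\<^sub>R ei)" for s
  have "DERIV g s :> Df (x + h *\<^sub>R ej + s *\<^sub>R ei) $ i - Df (x + s *\<^sub>R ei) $ i"
    if "0 \<le> s" "s \<le> h" for s
  proof -
    have "x + h *\<^sub>R ej + s *\<^sub>R ei \<in> \<Omega>" "x + s *\<^sub>R ei \<in> \<Omega>"
      using square[of s h] square[of s 0] that h by (simp_all add: ei_def ej_def algebra_simps)
    then have "(f has_derivative (\<lambda>v. Df (x + h *\<^sub>R ej + s *\<^sub>R ei) \<bullet> v)) (at (x + h *\<^sub>R ej + s *\<^sub>R ei))"
        and "(f has_derivative (\<lambda>v. Df (x + s *\<^sub>R ei) \<bullet> v)) (at (x + s *\<^sub>R ei))"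
      using der by blast+
    from this[THEN has_real_derivative_along_line] show ?thesis
      unfolding g_def by (auto intro!: derivative_eq_intros simp: ei_def inner_axis)
  qed
  from MVT2[OF h this] obtain \<xi> where \<xi>: "0 < \<xi>" "\<xi> < h"
    "g h - g 0 = h * (Df (x + h *\<^sub>R ej + \<xi> *\<^sub>R ei) $ i - Df (x + \<xi> *\<^sub>R ei) $ i)"
    by auto
  define k where "k t = Df (x + \<xi> *\<^sub>R ei + t *\<^sub>R ej) $ i" for t
  have "DERIV k t :> H (x + \<xi> *\<^sub>R ei + t *\<^sub>R ej) $ i $ j" if "0 \<le> t" "t \<le> h" for t
  proof -
    have "x + \<xi> *\<^sub>R ei + t *\<^sub>R ej \<in> \<Omega>" using square \<xi> that by (simp add: ei_def ej_def)
    then have "((\<lambda>y. Df y $ i) has_derivative (\<lambda>v. (H (x + \<xi> *\<^sub>R ei + t *\<^sub>R ej) *v v) $ i))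
            (at (x + \<xi> *\<^sub>R ei + t *\<^sub>R ej))"
      using bounded_linear.has_derivative[OF bounded_linear_vec_nth] der by blast
    from has_real_derivative_along_line[OF this] show ?thesis
      by (simp add: k_def[abs_def] ej_def matrix_vector_mult_basis column_def)
  qed
  from MVT2[OF h this] obtain \<eta> where \<eta>: "0 < \<eta>" "\<eta> < h"
    "k h - k 0 = h * H (x + \<xi> *\<^sub>R ei + \<eta> *\<^sub>R ej) $ i $ j"
    by auto
  have "f (x + h *\<^sub>R ei + h *\<^sub>R ej) - f (x + h *\<^sub>R ei) - f (x + h *\<^sub>R ej) + f x = g h - g 0"
    by (simp add: g_def algebra_simps)
  also have "\<dots> = h * (k h - k 0)"
    using \<xi>(3) by (simp add: k_def algebra_simps)
  also have "\<dots> = h\<^sup>2 * H (x + \<xi> *\<^sub>R ei + \<eta> *\<^sub>R ej) $ i $ j"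
    using \<eta>(3) by (simp add: power2_eq_square)
  finally show ?thesis
    using \<xi> \<eta> unfolding ei_def ej_def by (meson less_imp_le that)
qed

lemma abs_matrix_entry_le_norm: "\<bar>(A::real^'n^'m) $ i $ j\<bar> \<le> norm A"
  using component_le_norm_cart[of "A $ i" j] Finite_Cartesian_Product.norm_nth_le[of A i] by simp

lemma hessian_symmetric:
  fixes f :: "real^'n \<Rightarrow> real" and Df :: "real^'n \<Rightarrow> real^'n" and H :: "real^'n \<Rightarrow> real^'n^'n"
  assumes "open \<Omega>"
    and der: "\<And>y. y \<in> \<Omega> \<Longrightarrow>
      (f has_derivative (\<lambda>v. Df y \<bullet> v)) (at y) \<and> (Df has_derivative (\<lambda>v. H y *v v)) (at y)"
    and "continuous_on \<Omega> H" and "x \<in> \<Omega>"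
  shows "symmetric_mat (H x)"
proof -
  have close: "\<bar>H x $ i $ j - H x $ j $ i\<bar> < 2 * e" if "e > 0" for e i j
  proof -
    obtain d1 where d1: "d1 > 0" "\<And>y. y \<in> \<Omega> \<Longrightarrow> dist y x < d1 \<Longrightarrow> dist (H y) (H x) < e"
      using assms(3,4) \<open>e > 0\<close> unfolding continuous_on_iff by blast
    obtain d2 where d2: "d2 > 0" "ball x d2 \<subseteq> \<Omega>"
      using assms(1,4) open_contains_ball by blast
    define h where "h = min d1 d2 / 3"
    have "h > 0" using d1 d2 by (simp add: h_def)
    have square: "x + s *\<^sub>R axis a 1 + t *\<^sub>R axis b 1 \<in> \<Omega> \<and>
        \<bar>H (x + s *\<^sub>R axis a 1 + t *\<^sub>R axis b 1) $ c $ c' - H x $ c $ c'\<bar> < e"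
      if "0 \<le> s" "s \<le> h" "0 \<le> t" "t \<le> h" for s t and a b c c' :: 'n
    proof -
      let ?p = "x + s *\<^sub>R axis a 1 + t *\<^sub>R axis b 1"
      have "dist ?p x \<le> s + t"
        using norm_triangle_ineq[of "s *\<^sub>R axis a 1" "t *\<^sub>R (axis b 1 :: real^'n)"] that
        by (simp add: dist_norm)
      then have "dist ?p x < min d1 d2" using that d1 d2 by (simp add: h_def)
      then have "?p \<in> \<Omega>" using d2 by (auto simp: dist_commute)
      then have "dist (H ?p) (H x) < e" using d1 \<open>dist ?p x < min d1 d2\<close> by simp
      with \<open>?p \<in> \<Omega>\<close> show ?thesis
        using abs_matrix_entry_le_norm[of "H ?p - H x" c c'] by (simp add: dist_norm)
    qed
    obtain s1 t1 where st1: "0 \<le> s1" "s1 \<le> h" "0 \<le> t1" "t1 \<le> h"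
      "f (x + h *\<^sub>R axis i 1 + h *\<^sub>R axis j 1) - f (x + h *\<^sub>R axis i 1) - f (x + h *\<^sub>R axis j 1) + f x
         = h\<^sup>2 * H (x + s1 *\<^sub>R axis i 1 + t1 *\<^sub>R axis j 1) $ i $ j"
      by (rule mixed_difference_eq_hessian_entry[OF der \<open>h > 0\<close> square[THEN conjunct1]])
    obtain s2 t2 where st2: "0 \<le> s2" "s2 \<le> h" "0 \<le> t2" "t2 \<le> h"
      "f (x + h *\<^sub>R axis j 1 + h *\<^sub>R axis i 1) - f (x + h *\<^sub>R axis j 1) - f (x + h *\<^sub>R axis i 1) + f x
         = h\<^sup>2 * H (x + s2 *\<^sub>R axis j 1 + t2 *\<^sub>R axis i 1) $ j $ i"
      by (rule mixed_difference_eq_hessian_entry[OF der \<open>h > 0\<close> square[THEN conjunct1]])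
    \<comment> \<open>the mixed second difference is symmetric in \<open>i\<close> and \<open>j\<close>\<close>
    have "f (x + h *\<^sub>R axis j 1 + h *\<^sub>R axis i 1) = f (x + h *\<^sub>R axis i 1 + h *\<^sub>R axis j 1)"
      by (simp add: algebra_simps)
    then have "h\<^sup>2 * H (x + s1 *\<^sub>R axis i 1 + t1 *\<^sub>R axis j 1) $ i $ j =
               h\<^sup>2 * H (x + s2 *\<^sub>R axis j 1 + t2 *\<^sub>R axis i 1) $ j $ i"
      using st1(5) st2(5) by linarith
    then have "H (x + s1 *\<^sub>R axis i 1 + t1 *\<^sub>R axis j 1) $ i $ j =
          H (x + s2 *\<^sub>R axis j 1 + t2 *\<^sub>R axis i 1) $ j $ i"
      using \<open>h > 0\<close> by simp
    then show ?thesis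
      using square[OF st1(1-4), of i j i j] square[OF st2(1-4), of j i j i] by linarith
  qed
  have "H x $ i $ j = H x $ j $ i" for i j
  proof (rule ccontr)
    assume "H x $ i $ j \<noteq> H x $ j $ i"
    then show False using close[of "\<bar>H x $ i $ j - H x $ j $ i\<bar> / 2" i j] by simp
  qed
  then show ?thesis by (simp add: symmetric_mat_iff)
qed

lemma norm_matrix_vector_mult_le:
  fixes A :: "real^'n^'m"
  shows "norm (A *v h) \<le> real CARD('m) * real CARD('n) * norm A * norm h"
proof -
  have "norm (A *v h) \<le> onorm ((*v) A) * norm h"
    by (rule onorm[OF matrix_vector_mul_bounded_linear])
  also have "onorm ((*v) A) \<le> real CARD('m) * real CARD('n) * norm A"
    by (rule onorm_le_matrix_component) (rule abs_matrix_entry_le_norm)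
  finally show ?thesis by (simp add: mult_right_mono)
qed

text \<open>On a compact cylinder the continuous derivatives converge uniformly as \<open>t \<rightarrow> 0\<close>;
  \<open>app\<close> turns the data \<open>G\<close> (a gradient or a Hessian) into the derivative.\<close>
lemma has_derivative_at_time_zero:
  fixes F :: "'a::euclidean_space \<Rightarrow> real \<Rightarrow> 'b::banach" and G :: "'a \<Rightarrow> real \<Rightarrow> 'c::real_normed_vector"
    and app :: "'c \<Rightarrow> 'a \<Rightarrow> 'b"
  assumes app: "\<And>A B h. norm (app A h - app B h) \<le> C * norm (A - B) * norm h"
    and "C \<ge> 0" "T > 0" "r > 0"
    and der: "\<And>y t. y \<in> ball x r \<Longrightarrow> 0 < t \<Longrightarrow> t < T \<Longrightarrow>
      ((\<lambda>y. F y t) has_derivative app (G y t)) (at y)"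
    and contF: "continuous_on (cball x r \<times> {0..T}) (\<lambda>(y,t). F y t)"
    and contG: "continuous_on (cball x r \<times> {0..T}) (\<lambda>(y,t). G y t)"
  shows "((\<lambda>y. F y 0) has_derivative app (G x 0)) (at x)"
proof -
  define K where "K = cball x r \<times> {0..T}"
  define t where "t n = T / real (n + 2)" for n
  have t: "0 < t n" "t n < T" for n
    using \<open>T > 0\<close> by (auto simp: t_def field_simps add_pos_nonneg)
  have "t \<longlonglongrightarrow> 0"
    unfolding t_def using LIMSEQ_ignore_initial_segment[OF lim_const_over_n[of T], of 2] by simp
  have in_K: "(y, t n) \<in> K" "(y, 0) \<in> K" if "y \<in> ball x r" for y n
    using that t[of n] \<open>T > 0\<close> by (auto simp: K_def)
  have uniform: "\<forall>\<^sub>F n in sequentially. \<forall>y\<in>ball x r. \<forall>h.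
      norm (app (G y (t n)) h - app (G y 0) h) \<le> e * norm h" if "e > 0" for e
  proof -
    have "uniformly_continuous_on K (\<lambda>(y,t). G y t)"
      using compact_uniformly_continuous[OF contG] by (simp add: K_def compact_Times)
    moreover have e': "e / (C + 1) > 0" using \<open>e > 0\<close> \<open>C \<ge> 0\<close> by simp
    ultimately obtain d where d: "d > 0"
      "\<And>p q. p \<in> K \<Longrightarrow> q \<in> K \<Longrightarrow> dist q p < d \<Longrightarrow>
         dist ((\<lambda>(y,t). G y t) q) ((\<lambda>(y,t). G y t) p) < e / (C + 1)"
      unfolding uniformly_continuous_on_def by metis
    have Ce: "C * (e / (C + 1)) \<le> e"
      using \<open>C \<ge> 0\<close> \<open>e > 0\<close> by (simp add: field_simps)
    from order_tendstoD(2)[OF \<open>t \<longlonglongrightarrow> 0\<close> d(1)] show ?thesis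
    proof (rule eventually_mono)
      fix n assume "t n < d"
      show "\<forall>y\<in>ball x r. \<forall>h. norm (app (G y (t n)) h - app (G y 0) h) \<le> e * norm h"
      proof (intro ballI allI)
        fix y and h :: 'a assume "y \<in> ball x r"
        have "dist (y, t n) (y, 0) < d" using t[of n] \<open>t n < d\<close> by (simp add: dist_Pair_Pair)
        then have "norm (G y (t n) - G y 0) \<le> e / (C + 1)"
          using d(2)[OF in_K(2,1)[OF \<open>y \<in> ball x r\<close>]] by (fastforce simp: dist_norm)
        then have "C * norm (G y (t n) - G y 0) * norm h \<le> C * (e / (C + 1)) * norm h"
          using \<open>C \<ge> 0\<close> by (intro mult_right_mono mult_left_mono) auto
        also have "\<dots> \<le> e * norm h" using Ce by (rule mult_right_mono) simp
        finally show "norm (app (G y (t n)) h - app (G y 0) h) \<le> e * norm h"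
          using app order_trans by blast
      qed
    qed
  qed
  have pointwise: "(\<lambda>n. F y (t n)) \<longlonglongrightarrow> F y 0" if "y \<in> ball x r" for y
  proof -
    have "((\<lambda>n. (\<lambda>(y,t). F y t) (y, t n)) \<longlongrightarrow> (\<lambda>(y,t). F y t) (y, 0)) sequentially"
      using in_K[OF that] \<open>t \<longlonglongrightarrow> 0\<close>
      by (intro continuous_on_tendsto_compose[OF contF[folded K_def]] tendsto_intros always_eventually)
        auto
    then show ?thesis by simp
  qed
  have derivative_within: "((\<lambda>y. F y (t n)) has_derivative app (G y (t n))) (at y within ball x r)"
    if "y \<in> ball x r" for n y
    using der[OF that t] by (rule has_derivative_at_withinI)
  have "x \<in> ball x r" using \<open>r > 0\<close> by simp
  from has_derivative_sequence[where f="\<lambda>n y. F y (t n)" and f'="\<lambda>n y. app (G y (t n))"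
      and g'="\<lambda>y. app (G y 0)", OF convex_ball derivative_within uniform this pointwise[OF this]]
  obtain g where g: "\<And>y. y \<in> ball x r \<Longrightarrow> (\<lambda>n. F y (t n)) \<longlonglongrightarrow> g y"
      "(g has_derivative app (G x 0)) (at x within ball x r)"
    using \<open>x \<in> ball x r\<close> by blast
  have "g y = F y 0" if "y \<in> ball x r" for y
    using LIMSEQ_unique g(1) pointwise that by blast
  moreover have "(g has_derivative app (G x 0)) (at x)"
    using g(2) at_within_open[OF \<open>x \<in> ball x r\<close> open_ball] by simp
  ultimately show ?thesis
    by (rule has_derivative_transform_within_open[OF _ open_ball \<open>x \<in> ball x r\<close>, rotated])
qed

lemma C21_closure_initial_derivatives:
  fixes \<Omega> :: "(real^'n) set"
  assumes C21: "C21_closure TYPE('n) \<Omega> T u Du H ut" and "open \<Omega>" "T > 0" "x \<in> \<Omega>"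
  shows "((\<lambda>y. u y 0) has_derivative (\<lambda>h. Du x 0 \<bullet> h)) (at x)"
    and "((\<lambda>y. Du y 0) has_derivative (\<lambda>h. H x 0 *v h)) (at x)"
proof -
  obtain r where r: "r > 0" "cball x r \<subseteq> \<Omega>"
    using \<open>open \<Omega>\<close> \<open>x \<in> \<Omega>\<close> open_contains_cball by blast
  then have cylinder: "cball x r \<times> {0..T} \<subseteq> closure \<Omega> \<times> {0..T}"
    using closure_subset by fastforce
  have in_\<Omega>: "y \<in> \<Omega>" if "y \<in> ball x r" for y
    using that r(2) by auto
  have der: "((\<lambda>y. u y t) has_derivative (\<lambda>h. Du y t \<bullet> h)) (at y)"
      "((\<lambda>y. Du y t) has_derivative (\<lambda>h. H y t *v h)) (at y)"
    if "y \<in> ball x r" "0 < t" "t < T" for y t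
    using C21 in_\<Omega>[OF that(1)] that(2,3) unfolding C21_closure_def by auto
  have cont: "continuous_on (cball x r \<times> {0..T}) (\<lambda>(y,t). u y t)"
      "continuous_on (cball x r \<times> {0..T}) (\<lambda>(y,t). Du y t)"
      "continuous_on (cball x r \<times> {0..T}) (\<lambda>(y,t). H y t)"
    using C21 continuous_on_subset[OF _ cylinder] unfolding C21_closure_def by blast+
  show "((\<lambda>y. u y 0) has_derivative (\<lambda>h. Du x 0 \<bullet> h)) (at x)"
  proof (rule has_derivative_at_time_zero[where app="\<lambda>A h. A \<bullet> h" and C=1,
        OF _ _ \<open>T > 0\<close> r(1) der(1) cont(1,2)])
    show "norm (A \<bullet> h - B \<bullet> h) \<le> 1 * norm (A - B) * norm h" for A B h :: "real^'n"
      using Cauchy_Schwarz_ineq2[of "A - B" h] by (simp add: inner_diff_left)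
  qed auto
  show "((\<lambda>y. Du y 0) has_derivative (\<lambda>h. H x 0 *v h)) (at x)"
  proof (rule has_derivative_at_time_zero[where app="\<lambda>A h. A *v h"
        and C="real CARD('n) * real CARD('n)", OF _ _ \<open>T > 0\<close> r(1) der(2) cont(2,3)])
    show "norm (A *v h - B *v h) \<le> (real CARD('n) * real CARD('n)) * norm (A - B) * norm h"
      for A B :: "real^'n^'n" and h :: "real^'n"
      using norm_matrix_vector_mult_le[of "A - B" h] by (simp add: matrix_vector_mult_diff_rdistrib)
  qed auto
qed

lemma C21_closure_initial_hessian:
  fixes \<Omega> :: "(real^'n) set"
  assumes C21: "C21_closure TYPE('n) \<Omega> T u Du H ut" and "open \<Omega>" "T > 0"
    and init: "\<And>x. x \<in> \<Omega> \<Longrightarrow> u x 0 = \<phi> x"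
    and \<phi>: "\<And>x. x \<in> \<Omega> \<Longrightarrow>
      (\<phi> has_derivative (\<lambda>h. D\<phi> x \<bullet> h)) (at x) \<and> (D\<phi> has_derivative (\<lambda>h. H\<phi> x *v h)) (at x)"
    and "x \<in> \<Omega>"
  shows "H x 0 = H\<phi> x"
proof -
  have Du_initial: "Du y 0 = D\<phi> y" if "y \<in> \<Omega>" for y
  proof -
    have "(\<phi> has_derivative (\<lambda>h. Du y 0 \<bullet> h)) (at y)"
      using C21_closure_initial_derivatives(1)[OF C21 \<open>open \<Omega>\<close> \<open>T > 0\<close> that]
      by (rule has_derivative_transform_within_open[OF _ \<open>open \<Omega>\<close> that]) (simp add: init)
    then have "(\<lambda>h. Du y 0 \<bullet> h) = (\<lambda>h. D\<phi> y \<bullet> h)"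
      using conjunct1[OF \<phi>[OF that]] by (rule has_derivative_unique)
    then show ?thesis by (simp add: fun_eq_iff vector_eq_rdot)
  qed
  have "(D\<phi> has_derivative (\<lambda>h. H x 0 *v h)) (at x)"
    using C21_closure_initial_derivatives(2)[OF C21 \<open>open \<Omega>\<close> \<open>T > 0\<close> \<open>x \<in> \<Omega>\<close>]
    by (rule has_derivative_transform_within_open[OF _ \<open>open \<Omega>\<close> \<open>x \<in> \<Omega>\<close>]) (simp add: Du_initial)
  then have "(\<lambda>h. H x 0 *v h) = (\<lambda>h. H\<phi> x *v h)"
    using conjunct2[OF \<phi>[OF \<open>x \<in> \<Omega>\<close>]] by (rule has_derivative_unique)
  then show ?thesis by (simp add: matrix_eq fun_eq_iff)
qed

theorem theorem3p2:
  fixes \<Omega> :: "(real^'n) set"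
    and m :: nat and T \<nu> :: real
    and f :: "real^'n \<Rightarrow> real \<Rightarrow> real"
    and \<phi> :: "real^'n \<Rightarrow> real \<Rightarrow> real"
    and D\<phi> :: "real^'n \<Rightarrow> real^'n"
    and H\<phi> :: "real^'n \<Rightarrow> real^'n^'n"
    and x0 x1 :: "real^'n"
  assumes dom: "open \<Omega>" "connected \<Omega>" "bounded \<Omega>" "\<Omega> \<noteq> {}"
    and m: "1 \<le> m" "m \<le> CARD('n)"
    and T: "T > 0"
    and f_pos: "\<nu> > 0" "\<forall>x\<in>closure \<Omega>. \<forall>t\<in>{0..T}. f x t \<ge> \<nu>"
    and phi_C2: "\<forall>x\<in>\<Omega>. ((\<lambda>y. \<phi> y 0) has_derivative (\<lambda>h. D\<phi> x \<bullet> h)) (at x) \<and>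
                          (D\<phi> has_derivative (\<lambda>h. H\<phi> x *v h)) (at x)"
      "continuous_on \<Omega> H\<phi>"
    and x0: "x0 \<in> \<Omega>" "kpositive (m - 1) (H\<phi> x0)"
    and x1: "x1 \<in> \<Omega>" "\<not> kpositive (m - 1) (H\<phi> x1)"
  shows "\<not> (\<exists>u Du H ut.
            C21_closure TYPE('n) \<Omega> T u Du H ut \<and>
            (\<forall>x\<in>closure \<Omega>. \<forall>t\<in>{0..T}. Em m (ut x t) (H x t) = f x t) \<and>
            (\<forall>x\<in>\<Omega>. u x 0 = \<phi> x 0) \<and>
            (\<forall>x\<in>frontier \<Omega>. \<forall>t\<in>{0..T}. u x t = \<phi> x t))"
proof
  assume "\<exists>u Du H ut.
            C21_closure TYPE('n) \<Omega> T u Du H ut \<and>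
            (\<forall>x\<in>closure \<Omega>. \<forall>t\<in>{0..T}. Em m (ut x t) (H x t) = f x t) \<and>
            (\<forall>x\<in>\<Omega>. u x 0 = \<phi> x 0) \<and>
            (\<forall>x\<in>frontier \<Omega>. \<forall>t\<in>{0..T}. u x t = \<phi> x t)"
  then obtain u Du H ut where C21: "C21_closure TYPE('n) \<Omega> T u Du H ut"
    and equation: "\<forall>x\<in>closure \<Omega>. \<forall>t\<in>{0..T}. Em m (ut x t) (H x t) = f x t"
    and initial: "\<forall>x\<in>\<Omega>. u x 0 = \<phi> x 0"
    by blast
  obtain k where m_Suc: "m = Suc k" using m(1) by (cases m) auto
  have H_initial: "H x 0 = H\<phi> x" if "x \<in> \<Omega>" for x
    using initial phi_C2(1) that
    by (intro C21_closure_initial_hessian[OF C21 dom(1) T, where \<phi>="\<lambda>y. \<phi> y 0" and D\<phi>=D\<phi>]) auto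
  have symmetric: "symmetric_mat (H\<phi> x)" if "x \<in> \<Omega>" for x
    using hessian_symmetric[OF dom(1) _ phi_C2(2) that] phi_C2(1) by blast
  have "\<forall>p\<in>{1..k}. Tsum p (H\<phi> x) > 0"
    if "x \<in> \<Omega>" "\<forall>p\<in>{1..k}. Tsum p (H\<phi> x) \<ge> 0" for x
  proof (rule Tsum_pos_if_nonneg[OF symmetric[OF that(1)] _ that(2)])
    show "k < CARD('n)" using m(2) m_Suc by simp
    have "x \<in> closure \<Omega>" using that(1) closure_subset by blast
    then have "Em m (ut x 0) (H x 0) = f x 0" "f x 0 \<ge> \<nu>"
      using equation f_pos(2) T by auto
    then show "- ut x 0 * Tsum k (H\<phi> x) + Tsum (Suc k) (H\<phi> x) > 0"
      using f_pos(1) H_initial[OF that(1)] by (simp add: Em_def m_Suc)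
  qed
  then have "kpositive k (H\<phi> x1)"
    using kpositive_connected[OF dom(2) phi_C2(2) _ x0(1) _ x1(1) symmetric[OF x1(1)]] x0(2) m_Suc
    by simp
  then show False using x1(2) m_Suc by simp
qed

end
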